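(* The size $z_{77sr}$ of the self-referencing LZ77 factorization satisfies, for each edit type $\ast\in\{\mathrm{sub},\mathrm{ins},\mathrm{del}\}$: $\mathsf{MS}_{\ast}(z_{77sr},n)\le 2$ and $\mathsf{AS}_{\ast}(z_{77sr},n)\le z_{77sr}$, i.e. $z_{77sr}(T')\le 2z_{77sr}(T)$ for every string $T$ of length $n$ and every $T'$ obtained from $T$ by one edit of that type.
   Context: Strings are over an alphabet $\Sigma$; $\mathsf{ed}$ is the edit distance. $\mathsf{MS}_{\mathrm{sub}}(C,n)=\max_{T\in\Sigma^n}\{C(T')/C(T): T'\in\Sigma^n,\ \mathsf{ed}(T,T')=1\}$, with $\mathsf{MS}_{\mathrm{ins}},\mathsf{MS}_{\mathrm{del}}$ analogous for $T'$ of length $n+1$, resp. $n-1$, and $\mathsf{AS}_\ast$ analogous with $C(T')-C(T)$. The self-referencing LZ77 factorization of $T$ is $T=f_1\cdots f_z$ where for each $1\le i<z$, $f_i[1..|f_i|-1]$ is the longest prefix of $f_i\cdots f_z$ that has an occurrence in $T$ beginning at a position in $[1..|f_1\cdots f_{i-1}|]$ (the occurrence may overlap $f_i$), i.e. $f_i$ is one character longer than that; $f_z$ is the remaining suffix; $z_{77sr}(T)=z$. *)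

theory Defs
  imports Main
begin

fun ed :: "'a list \<Rightarrow> 'a list \<Rightarrow> nat" where
  "ed [] ys = length ys"
| "ed xs [] = length xs"
| "ed (x # xs) (y # ys) =
     min (min (ed xs (y # ys) + 1) (ed (x # xs) ys + 1))
         (ed xs ys + (if x = y then 0 else 1))"

text \<open>Length of the longest prefix of T[p..] that has an occurrence in T starting at
  some position q < p (the occurrence may overlap position p onwards).\<close>
definition lz_len :: "'a list \<Rightarrow> nat \<Rightarrow> nat" where
  "lz_len T p = (GREATEST l. l \<le> length T - p \<and>
      (l = 0 \<or> (\<exists>q<p. take l (drop q T) = take l (drop p T))))"

text \<open>Number of phrases of the self-referencing LZ77 factorization of the suffix of T
  starting at position p: the phrase starting at p has length lz_len T p + 1,
  unless it is the last phrase (remaining suffix).\<close>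
function lz_count :: "'a list \<Rightarrow> nat \<Rightarrow> nat" where
  "lz_count T p = (if length T \<le> p then 0 else Suc (lz_count T (p + lz_len T p + 1)))"
  by pat_completeness auto
termination
  by (relation "measure (\<lambda>(T, p). length T - p)") auto

definition z77sr :: "'a list \<Rightarrow> nat" where
  "z77sr T = lz_count T 0"

end

theory Submission
  imports Defs
begin

(* Call W[a..a+n) an earlier factor if it also occurs at some position before a. The greedy
   parse starts at most one phrase in the closed interval [a, a+n], since a phrase starting there
   can copy at least up to a+n. Write the edit as T = u x v, T' = u y v with |x|, |y| <= 1.
   The image in T' of a phrase of T is covered by one such interval, or by two when the source
   of the phrase straddles the edit, and the phrase containing the edit needs one interval more.
   As the first phrase is a single letter, z(T') <= 1 + 2 (z(T) - 1) + 1. *)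

definition earlier_factor :: "'a list \<Rightarrow> nat \<Rightarrow> nat \<Rightarrow> bool" where
  "earlier_factor W p l \<longleftrightarrow> l \<le> length W - p \<and>
     (l = 0 \<or> (\<exists>q<p. take l (drop q W) = take l (drop p W)))"

lemma earlier_factor_lz_len: "earlier_factor W p (lz_len W p)"
  unfolding lz_len_def earlier_factor_def
  by (rule GreatestI_nat[where k = 0 and b = "length W - p"]) auto

lemma earlier_factor_le_lz_len: "earlier_factor W p l \<Longrightarrow> l \<le> lz_len W p"
  unfolding lz_len_def earlier_factor_def
  by (rule Greatest_le_nat[where b = "length W - p"]) auto

lemma take_drop_eq_shift:
  assumes "take l (drop a W) = take l (drop b W)" and "k + m \<le> l"
  shows "take m (drop (k + a) W) = take m (drop (k + b) W)"
proof -
  have "take m (drop (k + c) W) = take m (drop k (take l (drop c W)))" for c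
    using assms(2) by (simp add: drop_take min_def)
  then show ?thesis using assms(1) by metis
qed

lemma earlier_factor_drop:
  assumes "earlier_factor W a n" and "k \<le> n"
  shows "earlier_factor W (a + k) (n - k)"
proof (cases "k = n")
  case False
  with assms obtain q where "q < a" and eq: "take n (drop q W) = take n (drop a W)"
    by (auto simp: earlier_factor_def)
  then have "take (n - k) (drop (k + q) W) = take (n - k) (drop (k + a) W)"
    using assms(2) by (intro take_drop_eq_shift) auto
  with \<open>q < a\<close> assms show ?thesis
    unfolding earlier_factor_def
    by (intro conjI disjI2 exI[of _ "k + q"]) (auto simp: add.commute)
qed (simp add: earlier_factor_def)

definition lz_next :: "'a list \<Rightarrow> nat \<Rightarrow> nat" where
  "lz_next W p = p + lz_len W p + 1"

definition lz_start :: "'a list \<Rightarrow> nat \<Rightarrow> nat" where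
  "lz_start W j = (lz_next W ^^ j) 0"

definition lz_starts :: "'a list \<Rightarrow> nat set" where
  "lz_starts W = lz_start W ` {..<z77sr W}"

definition starts_between :: "'a list \<Rightarrow> nat \<Rightarrow> nat \<Rightarrow> nat" where
  "starts_between W a b = card (lz_starts W \<inter> {a..<b})"

declare lz_count.simps [simp del]

lemma lz_count_gt_iff: "j < lz_count W p \<longleftrightarrow> (lz_next W ^^ j) p < length W"
proof (induction W p arbitrary: j rule: lz_count.induct)
  case (1 W p)
  show ?case
  proof (cases "length W \<le> p")
    case True
    have "p \<le> (lz_next W ^^ j) p"
      by (induction j) (auto simp: lz_next_def)
    with True show ?thesis by (subst lz_count.simps) simp
  next
    case False
    then have "lz_count W p = Suc (lz_count W (lz_next W p))"
      by (subst lz_count.simps) (simp add: lz_next_def)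
    moreover have "i < lz_count W (lz_next W p) \<longleftrightarrow> (lz_next W ^^ i) (lz_next W p) < length W"
      for i using "1.IH"[OF False] unfolding lz_next_def[of W p] .
    ultimately show ?thesis
      using False by (cases j) (simp_all add: funpow_Suc_right del: funpow.simps)
  qed
qed

lemma z77sr_gt_iff: "j < z77sr W \<longleftrightarrow> lz_start W j < length W"
  by (simp add: z77sr_def lz_start_def lz_count_gt_iff)

lemma lz_start_Suc: "lz_start W (Suc j) = lz_next W (lz_start W j)"
  by (simp add: lz_start_def)

lemma lz_start_0 [simp]: "lz_start W 0 = 0"
  by (simp add: lz_start_def)

lemma lz_start_1: "lz_start W (Suc 0) = 1"
proof -
  have "earlier_factor W 0 (lz_len W 0)" by (rule earlier_factor_lz_len)
  then show ?thesis by (simp add: lz_start_def lz_next_def earlier_factor_def)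
qed

lemma strict_mono_lz_start: "strict_mono (lz_start W)"
  unfolding strict_mono_Suc_iff by (simp add: lz_start_Suc lz_next_def)

lemma z77sr_pos: "W \<noteq> [] \<Longrightarrow> 0 < z77sr W"
  by (simp add: z77sr_gt_iff)

lemma z77sr_eq_starts_between: "z77sr W = starts_between W 0 (length W)"
proof -
  have "z77sr W = card (lz_starts W)"
    unfolding lz_starts_def
    by (simp add: card_image strict_mono_imp_inj_on[OF strict_mono_lz_start])
  moreover have "lz_starts W \<subseteq> {0..<length W}"
    by (auto simp: lz_starts_def z77sr_gt_iff)
  ultimately show ?thesis
    by (simp add: starts_between_def Int_absorb2)
qed

lemma starts_between_le: "starts_between W a b \<le> b - a"
  unfolding starts_between_def
  by (metis card_atLeastLessThan card_mono finite_atLeastLessThan inf_le2)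

lemma starts_between_split: "starts_between W a c \<le> starts_between W a b + starts_between W b c"
proof -
  have "lz_starts W \<inter> {a..<c} \<subseteq> (lz_starts W \<inter> {a..<b}) \<union> (lz_starts W \<inter> {b..<c})"
    by auto
  then have "card (lz_starts W \<inter> {a..<c})
      \<le> card ((lz_starts W \<inter> {a..<b}) \<union> (lz_starts W \<inter> {b..<c}))"
    by (intro card_mono) auto
  also have "\<dots> \<le> card (lz_starts W \<inter> {a..<b}) + card (lz_starts W \<inter> {b..<c})"
    by (rule card_Un_le)
  finally show ?thesis unfolding starts_between_def .
qed

lemma starts_between_telescope:
  "starts_between W (g 0) (g k) \<le> (\<Sum>j<k. starts_between W (g j) (g (Suc j)))"
proof (induction k)
  case 0
  then show ?case by (simp add: starts_between_def)
next
  case (Suc k)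
  then show ?case using starts_between_split[of W "g 0" "g (Suc k)" "g k"] by simp
qed

lemma lz_next_gt_earlier_factor:
  assumes "earlier_factor W a n" and "a \<le> x" and "x \<le> a + n"
  shows "a + n < lz_next W x"
proof -
  have "earlier_factor W x (n - (x - a))"
    using earlier_factor_drop[OF assms(1), of "x - a"] assms(2,3) by simp
  then have "n - (x - a) \<le> lz_len W x"
    by (rule earlier_factor_le_lz_len)
  then show ?thesis using assms(2,3) unfolding lz_next_def by linarith
qed

lemma starts_between_earlier_factor:
  assumes "earlier_factor W a n"
  shows "starts_between W a (Suc (a + n)) \<le> 1"
proof -
  let ?S = "lz_starts W \<inter> {a..<Suc (a + n)}"
  have no_later: False if x: "x \<in> ?S" and y: "y \<in> ?S" and "x < y" for x y
  proof -
    obtain j k where xj: "x = lz_start W j" and yk: "y = lz_start W k"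
      using x y by (auto simp: lz_starts_def)
    then have "Suc j \<le> k"
      using \<open>x < y\<close> strict_mono_lz_start[of W] by (simp add: strict_mono_less Suc_le_eq)
    then have "lz_next W x \<le> y"
      using strict_mono_lz_start[of W]
      by (simp add: xj yk strict_mono_less_eq flip: lz_start_Suc)
    moreover have "a + n < lz_next W x"
      using x by (intro lz_next_gt_earlier_factor[OF assms]) auto
    ultimately show False using y by simp
  qed
  have "\<forall>x\<in>?S. \<forall>y\<in>?S. x = y"
    using no_later by (metis linorder_neqE_nat)
  then show ?thesis
    unfolding starts_between_def One_nat_def by (subst card_le_Suc0_iff_eq) auto
qed

lemma strict_mono_segment_unique:
  assumes "strict_mono (f :: nat \<Rightarrow> nat)"
    and "f j \<le> i" "i < f (Suc j)" and "f k \<le> i" "i < f (Suc k)"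
  shows "j = k"
proof (rule ccontr)
  assume "j \<noteq> k"
  then consider "Suc j \<le> k" | "Suc k \<le> j" by linarith
  then show False
  proof cases
    case 1
    then have "f (Suc j) \<le> f k" using assms(1) by (simp add: strict_mono_less_eq)
    then show False using assms(3,4) by linarith
  next
    case 2
    then have "f (Suc k) \<le> f j" using assms(1) by (simp add: strict_mono_less_eq)
    then show False using assms(2,5) by linarith
  qed
qed

lemma sum_le_double:
  fixes c w :: "nat \<Rightarrow> nat"
  assumes "0 < z" and "\<And>j. j < z \<Longrightarrow> c j \<le> 2 + w j" and "c 0 \<le> 1 + w 0"
  shows "(\<Sum>j<z. c j) + 1 \<le> 2 * z + (\<Sum>j<z. w j)"
proof -
  obtain z' where z: "z = Suc z'" using assms(1) gr0_conv_Suc by blast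
  have "(\<Sum>j<z'. c (Suc j)) \<le> (\<Sum>j<z'. 2 + w (Suc j))"
    using assms(2) z by (intro sum_mono) simp
  then have "(\<Sum>j<z. c j) + 1 \<le> (\<Sum>j<z. 2 + w j)"
    using assms(3) by (simp add: z sum.lessThan_Suc_shift del: sum.lessThan_Suc)
  also have "\<dots> = 2 * z + (\<Sum>j<z. w j)"
    by (simp only: sum.distrib) simp
  finally show ?thesis .
qed

(* Substitution, insertion and deletion are the cases |x| = |y| = 1, |x| = 0 < |y| and
   |y| = 0 < |x|. *)
locale single_edit =
  fixes u x y v T T' :: "'a list"
  assumes T_eq: "T = u @ x @ v" and T'_eq: "T' = u @ y @ v"
    and length_x: "length x \<le> 1" and length_y: "length y \<le> 1"
begin

(* align sends a position of T outside x to the position of the same letter of T';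
   align_boundary sends phrase boundaries, fixing the boundary at the edit so that y is
   assigned to the phrase of T containing the edit. *)
definition align :: "nat \<Rightarrow> nat" where
  "align r = (if r < length u then r else r + length y - length x)"

definition align_boundary :: "nat \<Rightarrow> nat" where
  "align_boundary p = (if p \<le> length u then p else p + length y - length x)"

definition avoids_edit :: "nat \<Rightarrow> nat \<Rightarrow> bool" where
  "avoids_edit r n \<longleftrightarrow> r + n \<le> length u \<or> length u + length x \<le> r"

definition edit_in_phrase :: "nat \<Rightarrow> bool" where
  "edit_in_phrase j \<longleftrightarrow> lz_start T j \<le> length u \<and> length u < lz_start T (Suc j)"

lemma length_T': "length T' + length x = length T + length y"
  by (simp add: T_eq T'_eq)

lemma take_drop_align:
  assumes "avoids_edit r n" and "r + n \<le> length T"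
  shows "take n (drop (align r) T') = take n (drop r T)"
proof (cases "r + n \<le> length u")
  case True
  then show ?thesis
    by (cases "n = 0") (auto simp: align_def T_eq T'_eq)
next
  case False
  with assms(1) obtain k where "r = length u + length x + k"
    by (auto simp: avoids_edit_def dest: le_Suc_ex)
  moreover have "align r = length u + length y + k"
    using calculation length_x by (auto simp: align_def)
  ultimately show ?thesis by (simp add: T_eq T'_eq)
qed

lemma align_less:
  assumes "r' < r" and "avoids_edit r' n" and "avoids_edit r n" and "0 < n"
  shows "align r' < align r"
  using assms length_x by (auto simp: align_def avoids_edit_def)

lemma starts_between_copy_avoiding:
  assumes eq: "take n (drop r' T) = take n (drop r T)" and "r' < r" and "r + n \<le> length T"
    and "avoids_edit r' n" and "avoids_edit r n"
  shows "starts_between T' (align r) (Suc (align r + n)) \<le> 1"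
proof (cases "n = 0")
  case True
  then show ?thesis using starts_between_le[of T' "align r" "Suc (align r)"] by simp
next
  case False
  have "r' + n \<le> length T" using assms(2,3) by linarith
  then have copy: "take n (drop (align r') T') = take n (drop (align r) T')"
    using take_drop_align[OF assms(4)] take_drop_align[OF assms(5,3)] eq by simp
  have "length (take n (drop (align r) T')) = n"
    using take_drop_align[OF assms(5,3)] assms(3) by simp
  then have "n \<le> length T' - align r" by simp
  with copy align_less[OF assms(2,4,5)] False have "earlier_factor T' (align r) n"
    unfolding earlier_factor_def by blast
  then show ?thesis by (rule starts_between_earlier_factor)
qed

lemma starts_between_copy:
  assumes eq: "take n (drop r' T) = take n (drop r T)" and "r' < r" and "r + n \<le> length T"
    and "avoids_edit r n"
  shows "starts_between T' (align r) (Suc (align r + n)) \<le> 2"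
proof (cases "avoids_edit r' n")
  case True
  then show ?thesis using starts_between_copy_avoiding[OF assms(1-3) True assms(4)] by simp
next
  case False
  define d where "d = length u - r'"
  have straddle: "r' \<le> length u" "length u < r' + n" "r' + d = length u" "d < n"
    using False length_x by (auto simp: avoids_edit_def d_def)
  have right: "length u + length x \<le> r"
    using assms(2,4) straddle(2) by (auto simp: avoids_edit_def)
  have "starts_between T' (align r) (Suc (align r + d)) \<le> 1"
  proof (rule starts_between_copy_avoiding)
    show "take d (drop r' T) = take d (drop r T)"
      using take_drop_eq_shift[OF eq, of 0 d] straddle by simp
  qed (use assms straddle right in \<open>auto simp: avoids_edit_def\<close>)
  moreover have "starts_between T' (align (Suc d + r)) (Suc (align (Suc d + r) + (n - Suc d))) \<le> 1"
  proof (rule starts_between_copy_avoiding)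
    show "take (n - Suc d) (drop (Suc d + r') T) = take (n - Suc d) (drop (Suc d + r) T)"
      using take_drop_eq_shift[OF eq, of "Suc d" "n - Suc d"] straddle by simp
  qed (use assms straddle right length_x in \<open>auto simp: avoids_edit_def\<close>)
  moreover have "align (Suc d + r) = Suc (align r + d)"
    using right by (auto simp: align_def)
  ultimately show ?thesis
    using starts_between_split[of T' "align r" "Suc (align r + n)" "Suc (align r + d)"] straddle(4)
    by simp
qed

lemma starts_between_copy_before_edit:
  assumes eq: "take l (drop q T) = take l (drop s T)" and "q < s"
    and "s \<le> length u" and "length u \<le> s + l"
  shows "starts_between T' s (Suc (length u)) \<le> 1"
proof (cases "s = length u")
  case True
  then show ?thesis using starts_between_le[of T' s "Suc (length u)"] by simp
next
  case False
  have "starts_between T' (align s) (Suc (align s + (length u - s))) \<le> 1"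
  proof (rule starts_between_copy_avoiding)
    show "take (length u - s) (drop q T) = take (length u - s) (drop s T)"
      using take_drop_eq_shift[OF eq, of 0 "length u - s"] assms(3,4) by simp
  qed (use assms in \<open>auto simp: avoids_edit_def T_eq\<close>)
  then show ?thesis using assms(3) False by (simp add: align_def)
qed

(* Past the edit the phrase is still a copy from the same distance s - q, but its source may
   now straddle the edit. *)
lemma starts_between_copy_after_edit:
  assumes eq: "take l (drop q T) = take l (drop s T)" and "q < s" and "s + l \<le> length T"
    and "s \<le> length u" and "length u \<le> s + l"
  shows "starts_between T' (Suc (length u)) (align_boundary (Suc (s + l))) \<le> 2"
proof (cases "length u + 1 + length x - length y \<le> s + l")
  case True
  define r where "r = length u + 1 + length x - length y"
  have "starts_between T' (align r) (Suc (align r + (s + l - r))) \<le> 2"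
  proof (rule starts_between_copy)
    show "take (s + l - r) (drop (r - s + q) T) = take (s + l - r) (drop r T)"
      using take_drop_eq_shift[OF eq, of "r - s" "s + l - r"] assms(4) True length_y
      by (simp add: r_def)
  qed (use assms True length_y in \<open>auto simp: r_def avoids_edit_def\<close>)
  moreover have "align r = Suc (length u)"
    using length_y by (simp add: r_def align_def)
  moreover have "align_boundary (Suc (s + l)) = Suc (align r + (s + l - r))"
    using assms(5) True length_x length_y by (auto simp: r_def align_def align_boundary_def)
  ultimately show ?thesis by simp
next
  case False
  then have "align_boundary (Suc (s + l)) - Suc (length u) \<le> 2"
    using assms(5) length_y by (simp add: align_boundary_def)
  then show ?thesis
    using starts_between_le[of T' "Suc (length u)" "align_boundary (Suc (s + l))"] by simp
qed

lemma starts_between_phrase: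
  assumes s: "s < length T"
  shows "starts_between T' (align_boundary s) (align_boundary (lz_next T s))
    \<le> (if s \<le> length u \<and> length u < lz_next T s then 3 else 2)"
proof -
  define l where "l = lz_len T s"
  have next_eq: "lz_next T s = Suc (s + l)" by (simp add: lz_next_def l_def)
  have factor: "earlier_factor T s l" unfolding l_def by (rule earlier_factor_lz_len)
  then have sl: "s + l \<le> length T" using s by (auto simp: earlier_factor_def)
  show ?thesis
  proof (cases "l = 0")
    case True
    then have "align_boundary (lz_next T s) - align_boundary s \<le> 2"
      using next_eq length_x length_y by (auto simp: align_boundary_def)
    then show ?thesis
      using starts_between_le[of T' "align_boundary s" "align_boundary (lz_next T s)"] by simp
  next
    case False
    with factor obtain q where "q < s" and eq: "take l (drop q T) = take l (drop s T)"
      by (auto simp: earlier_factor_def)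
    show ?thesis
    proof (cases "s \<le> length u \<and> length u < lz_next T s")
      case False
      then have "avoids_edit s l"
        using next_eq length_x by (auto simp: avoids_edit_def)
      moreover have "align_boundary s = align s" "align_boundary (lz_next T s) = Suc (align s + l)"
        using False next_eq length_x by (auto simp: align_boundary_def align_def)
      ultimately show ?thesis
        using starts_between_copy[OF eq \<open>q < s\<close> sl] False by simp
    next
      case True
      then have "s \<le> length u" "length u \<le> s + l" "align_boundary s = s"
        using next_eq by (auto simp: align_boundary_def)
      then show ?thesis
        using True next_eq starts_between_copy_before_edit[OF eq \<open>q < s\<close>]
          starts_between_copy_after_edit[OF eq \<open>q < s\<close> sl]
          starts_between_split[of T' s "align_boundary (lz_next T s)" "Suc (length u)"]
        by simp
    qed
  qed
qed

(* Only an insertion at the very end of T puts a letter of T' after the image of the last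
   phrase. *)
lemma edit_phrases_plus_tail_le_1:
  "(\<Sum>j<z77sr T. of_bool (edit_in_phrase j))
     + starts_between T' (align_boundary (lz_start T (z77sr T))) (length T') \<le> 1"
proof -
  let ?z = "z77sr T" and ?st = "lz_start T"
  have "length T \<le> ?st ?z"
    using z77sr_gt_iff[of ?z T] by simp
  then have tail: "length T' - align_boundary (?st ?z) \<le> (if length u < ?st ?z then 0 else 1)"
    using length_T' length_x length_y by (auto simp: align_boundary_def)
  let ?J = "{..<?z} \<inter> {j. edit_in_phrase j}"
  have "(\<Sum>j<?z. of_bool (edit_in_phrase j)) = card ?J"
    by simp
  also have "\<dots> \<le> (if length u < ?st ?z then 1 else 0)"
  proof (cases "length u < ?st ?z")
    case True
    have "\<forall>j\<in>?J. \<forall>k\<in>?J. j = k"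
      using strict_mono_segment_unique[OF strict_mono_lz_start, of T _ "length u"]
      by (simp add: edit_in_phrase_def)
    with True show ?thesis by (simp add: card_le_Suc0_iff_eq)
  next
    case False
    have "\<not> edit_in_phrase j" if "j < ?z" for j
    proof -
      have "?st (Suc j) \<le> ?st ?z"
        using that strict_mono_lz_start[of T] by (simp add: strict_mono_less_eq)
      then show ?thesis using False by (simp add: edit_in_phrase_def)
    qed
    then show ?thesis using False by auto
  qed
  finally show ?thesis
    using tail starts_between_le[of T' "align_boundary (?st ?z)" "length T'"]
    by (auto split: if_splits)
qed

theorem z77sr_le_double:
  assumes "T \<noteq> []"
  shows "z77sr T' \<le> 2 * z77sr T"
proof -
  let ?z = "z77sr T" and ?st = "lz_start T"
  define c
    where "c j = starts_between T' (align_boundary (?st j)) (align_boundary (?st (Suc j)))" for j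
  define tail where "tail = starts_between T' (align_boundary (?st ?z)) (length T')"
  have "z77sr T' \<le> starts_between T' (align_boundary (?st 0)) (align_boundary (?st ?z)) + tail"
    using starts_between_split[of T' 0 "length T'" "align_boundary (?st ?z)"]
    by (simp add: z77sr_eq_starts_between tail_def align_boundary_def)
  also have "\<dots> \<le> (\<Sum>j<?z. c j) + tail"
    using starts_between_telescope[of T' "\<lambda>j. align_boundary (?st j)" ?z] by (simp add: c_def)
  finally have "z77sr T' \<le> (\<Sum>j<?z. c j) + tail" .
  moreover have "(\<Sum>j<?z. c j) + 1 \<le> 2 * ?z + (\<Sum>j<?z. of_bool (edit_in_phrase j))"
  proof (rule sum_le_double)
    show "c j \<le> 2 + of_bool (edit_in_phrase j)" if "j < ?z" for j
      using starts_between_phrase[of "?st j"] that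
      by (auto simp: c_def edit_in_phrase_def z77sr_gt_iff lz_start_Suc split: if_splits)
    show "c 0 \<le> 1 + of_bool (edit_in_phrase 0)"
      using starts_between_le[of T' 0 "align_boundary 1"] length_x length_y
      by (auto simp: c_def edit_in_phrase_def lz_start_1 align_boundary_def Suc_le_eq)
  qed (use z77sr_pos[OF assms] in simp)
  ultimately show ?thesis
    using edit_phrases_plus_tail_le_1 by (simp add: tail_def)
qed

end

lemma ed_eq_0_imp_eq: "ed xs ys = 0 \<Longrightarrow> xs = ys"
  by (induction xs ys rule: ed.induct) (auto split: if_splits)

lemma ed_le_1_imp_single_edit:
  "ed xs ys \<le> 1 \<Longrightarrow>
    \<exists>u x y v. xs = u @ x @ v \<and> ys = u @ y @ v \<and> length x \<le> 1 \<and> length y \<le> 1"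
proof (induction xs ys rule: ed.induct)
  case (1 ys)
  then show ?case by (intro exI[of _ "[]"] exI[of _ ys]) simp
next
  case (2 a as)
  then show ?case by (intro exI[of _ "[]"] exI[of _ "a # as"]) simp
next
  case (3 a as b bs)
  consider "ed as (b # bs) = 0" | "ed (a # as) bs = 0" | "a = b" "ed as bs \<le> 1"
    | "a \<noteq> b" "ed as bs = 0"
    using "3.prems" by (cases "a = b") (auto simp: min_def split: if_splits)
  then show ?case
  proof cases
    case 1
    then show ?thesis using ed_eq_0_imp_eq
      by (intro exI[of _ "[]"] exI[of _ "[a]"] exI[of _ "[]"] exI[of _ as]) auto
  next
    case 2
    then show ?thesis using ed_eq_0_imp_eq
      by (intro exI[of _ "[]"] exI[of _ "[]"] exI[of _ "[b]"] exI[of _ bs]) auto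
  next
    case 3
    then obtain u x y v where "as = u @ x @ v" "bs = u @ y @ v" "length x \<le> 1" "length y \<le> 1"
      using "3.IH"(3) by auto
    with 3 show ?thesis
      by (intro exI[of _ "a # u"] exI[of _ x] exI[of _ y] exI[of _ v]) auto
  next
    case 4
    then show ?thesis using ed_eq_0_imp_eq
      by (intro exI[of _ "[]"] exI[of _ "[a]"] exI[of _ "[b]"] exI[of _ as]) auto
  qed
qed

theorem mainTheorem11:
  fixes T T' :: "'a list"
  assumes "T \<noteq> []"
  shows "(length T' = length T \<and> ed T T' = 1 \<longrightarrow> z77sr T' \<le> 2 * z77sr T)
       \<and> (length T' = length T + 1 \<and> ed T T' = 1 \<longrightarrow> z77sr T' \<le> 2 * z77sr T)
       \<and> (length T' + 1 = length T \<and> ed T T' = 1 \<longrightarrow> z77sr T' \<le> 2 * z77sr T)"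
proof -
  have "z77sr T' \<le> 2 * z77sr T" if "ed T T' = 1"
  proof -
    obtain u x y v where "single_edit u x y v T T'"
      using ed_le_1_imp_single_edit[of T T'] \<open>ed T T' = 1\<close> by (auto simp: single_edit_def)
    then show ?thesis using assms by (rule single_edit.z77sr_le_double)
  qed
  then show ?thesis by blast
qed

end
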